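(* Let $\kappa:[-1,1]\to\mathbb{R}$ be given by $\kappa(t)=\sum_{q\ge 0}\frac{J_q^2}{q!}t^q$, where $J_q\in\mathbb{R}$, $J_q\neq 0$ for infinitely many $q$, $\sum_{q\ge1}\frac{|J_q|}{(q-1)!}<\infty$ (so that $\kappa\in C^1([-1,1])$), and $\kappa(1)=1$. For $L\ge1$ let $\kappa_L=\kappa\circ\cdots\circ\kappa$ ($L$ times), and let $\mathcal{I}(\kappa)=\{t\in[-1,1]:\kappa(t)=1\}$. Assume $\kappa'(1)=1$ and that there exist $c\in\mathbb{R}\setminus\{0\}$ and $\rho>1$ such that \[ 1-\kappa(t)=\kappa'(1)(1-t)-c(1-t)^{\rho}+o\bigl((1-t)^{\rho}\bigr)\quad\text{as } t\to1^-. \] Then $c>0$ and, for every $t\in[-1,1]$, \[ \mathfrak{S}(t):=\lim_{L\to\infty}L^{1/(\rho-1)}\bigl(1-\kappa_L(t)\bigr)=\begin{cases}0,& t\in\mathcal{I}(\kappa),\\ h_{c,\rho},& t\notin\mathcal{I}(\kappa),\end{cases} \] where $h_{c,\rho}=(c(\rho-1))^{-1/(\rho-1)}$. *)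

theory Defs
  imports "HOL-Analysis.Analysis" "HOL-Library.Landau_Symbols"
begin

definition kappa :: "(nat \<Rightarrow> real) \<Rightarrow> real \<Rightarrow> real" where
  "kappa J t = (\<Sum>q. (J q)\<^sup>2 / fact q * t ^ q)"

definition fixset :: "(nat \<Rightarrow> real) \<Rightarrow> real set" where
  "fixset J = {t \<in> {-1..1}. kappa J t = 1}"

end

theory Submission
  imports Defs
begin

(* For t outside the fixed set the iterates kappa_L(t) increase to 1. Indeed kappa has
   nonnegative coefficients a_q = J_q^2/q! summing to 1, the condition kappa'(1) = 1 bounds the
   mean sum_q q a_q by 1, and as some a_q with q >= 2 is positive, comparing x^q with its tangent
   at 1 gives kappa(x) > x on [-1,1). With x_L = 1 - kappa_L(t) the expansion turns the iteration
   into x_(L+1) = x_L - w_L x_L^rho with w_L -> c. Positivity of x_L forces c >= 0, and then the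
   increments of x_L^(1-rho) tend to c (rho - 1), so x_L^(1-rho) ~ c (rho - 1) L by Stolz-Cesaro. *)

section \<open>Real sequences\<close>

lemma increments_near_imp_linear_bound:
  fixes y :: "nat \<Rightarrow> real"
  assumes near: "\<And>k. N \<le> k \<Longrightarrow> \<bar>y (Suc k) - y k - D\<bar> \<le> e" and "N \<le> n"
  shows "\<bar>y n - real n * D\<bar> \<le> \<bar>y N - real N * D\<bar> + (real n - real N) * e"
  using \<open>N \<le> n\<close>
proof (induction rule: dec_induct)
  case (step n)
  have "y (Suc n) - real (Suc n) * D = (y n - real n * D) + (y (Suc n) - y n - D)"
    by (simp add: algebra_simps)
  then have "\<bar>y (Suc n) - real (Suc n) * D\<bar> \<le> \<bar>y n - real n * D\<bar> + \<bar>y (Suc n) - y n - D\<bar>"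
    by (metis abs_triangle_ineq)
  moreover have "(real (Suc n) - real N) * e = (real n - real N) * e + e"
    by (simp add: algebra_simps)
  ultimately show ?case
    using step.IH near[OF step.hyps(1)] by linarith
qed simp

lemma Stolz_Cesaro_LIMSEQ:
  fixes y :: "nat \<Rightarrow> real"
  assumes "(\<lambda>n. y (Suc n) - y n) \<longlonglongrightarrow> D"
  shows "(\<lambda>n. y n / real n) \<longlonglongrightarrow> D"
proof (rule LIMSEQ_I)
  fix r :: real
  assume "0 < r"
  then obtain N where N: "\<And>k. N \<le> k \<Longrightarrow> \<bar>y (Suc k) - y k - D\<bar> \<le> r / 2"
    using LIMSEQ_D[OF assms, of "r / 2"] by (auto intro: less_imp_le)
  define C where "C = \<bar>y N - real N * D\<bar>"
  obtain M where M: "\<And>n. M \<le> n \<Longrightarrow> \<bar>C / real n\<bar> < r / 2"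
    using LIMSEQ_D[OF lim_const_over_n[of C], of "r / 2"] \<open>0 < r\<close> by auto
  have "\<bar>y n / real n - D\<bar> < r" if "max (Suc N) M \<le> n" for n
  proof -
    have n: "0 < real n" "N \<le> n" "M \<le> n"
      using that by auto
    have "y n / real n - D = (y n - real n * D) / real n"
      using n(1) by (simp add: field_simps)
    then have "\<bar>y n / real n - D\<bar> = \<bar>y n - real n * D\<bar> / real n"
      by (simp add: abs_divide)
    also have "\<dots> \<le> (C + (real n - real N) * (r / 2)) / real n"
      using increments_near_imp_linear_bound[where y = y, OF N n(2)]
      by (intro divide_right_mono) (simp_all add: C_def)
    also have "\<dots> = C / real n + (real n - real N) / real n * (r / 2)"
      by (simp add: add_divide_distrib)
    also have "\<dots> < r / 2 + 1 * (r / 2)"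
    proof (rule add_less_le_mono)
      show "C / real n < r / 2"
        using M[OF n(3)] by linarith
      show "(real n - real N) / real n * (r / 2) \<le> 1 * (r / 2)"
        using n(1) \<open>0 < r\<close> by (intro mult_right_mono) simp_all
    qed
    finally show ?thesis
      by simp
  qed
  then show "\<exists>no. \<forall>n\<ge>no. norm (y n / real n - D) < r"
    by (metis real_norm_def)
qed

lemma tendsto_one_minus_powr_quotient:
  fixes p :: real
  shows "((\<lambda>z. ((1 - z) powr (- p) - 1) / z) \<longlongrightarrow> p) (at 0)"
proof -
  have "((\<lambda>z. (1 - z) powr (- p)) has_real_derivative (- p) * (1 - 0) powr (- p - of_nat 1) * (- 1)) (at 0)"
    by (rule DERIV_fun_powr) (auto intro!: derivative_eq_intros)
  then show ?thesis
    by (simp add: has_field_derivative_iff)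
qed

lemma powr_recurrence_coeff_nonneg:
  fixes x w :: "nat \<Rightarrow> real"
  assumes pos: "\<And>n. 0 < x n" and x: "x \<longlonglongrightarrow> 0" and w: "w \<longlonglongrightarrow> c"
    and rec: "\<And>n. x (Suc n) = x n - x n powr \<rho> * w n"
  shows "0 \<le> c"
proof (rule ccontr)
  assume "\<not> 0 \<le> c"
  then obtain N where N: "\<And>n. N \<le> n \<Longrightarrow> w n < 0"
    using order_tendstoD(2)[OF w, of 0] by (auto simp: eventually_sequentially)
  have "x N \<le> x n" if "N \<le> n" for n
    using that
  proof (induction rule: dec_induct)
    case (step n)
    have "x n powr \<rho> * w n \<le> 0"
      using N[OF step.hyps(1)] by (simp add: mult_nonneg_nonpos)
    then show ?case
      using rec[of n] step.IH by linarith
  qed simp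
  then have "x N \<le> 0"
    by (intro LIMSEQ_le_const[OF x]) blast
  with pos[of N] show False
    by simp
qed

lemma powr_recurrence_increments:
  fixes x w :: "nat \<Rightarrow> real" and c \<rho> :: real
  assumes pos: "\<And>n. 0 < x n" and x: "x \<longlonglongrightarrow> 0" and w: "w \<longlonglongrightarrow> c"
    and c: "0 < c" and \<rho>: "1 < \<rho>"
    and rec: "\<And>n. x (Suc n) = x n - x n powr \<rho> * w n"
  shows "(\<lambda>n. x (Suc n) powr (1 - \<rho>) - x n powr (1 - \<rho>)) \<longlonglongrightarrow> c * (\<rho> - 1)"
proof -
  define p where "p = \<rho> - 1"
  define z where "z n = x n powr p * w n" for n
  (* The recurrence reads x' = x (1 - z), so x^(-p) grows by x^(-p) ((1 - z)^(-p) - 1),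
     which equals w ((1 - z)^(-p) - 1) / z and tends to c p since z -> 0. *)
  have step: "x (Suc n) = x n * (1 - z n)" for n
  proof -
    have "x n powr \<rho> = x n * x n powr p"
      using powr_add[of "x n" 1 p] pos[of n] by (simp add: p_def)
    then show ?thesis
      using rec[of n] by (simp add: z_def algebra_simps)
  qed
  have z_lt_1: "z n < 1" for n
    using step[of n] pos[of n] pos[of "Suc n"] by (simp add: zero_less_mult_iff)
  have "(\<lambda>n. x n powr p) \<longlonglongrightarrow> 0"
    by (rule tendsto_zero_powrI[OF x tendsto_const]) (use pos \<rho> in \<open>simp_all add: less_imp_le p_def\<close>)
  then have "z \<longlonglongrightarrow> 0"
    unfolding z_def using tendsto_mult[OF _ w] by fastforce
  moreover have w_pos: "\<forall>\<^sub>F n in sequentially. 0 < w n"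
    using order_tendstoD(1)[OF w c] .
  then have "\<forall>\<^sub>F n in sequentially. z n \<noteq> 0"
    by eventually_elim (use pos in \<open>simp add: z_def less_imp_neq[symmetric]\<close>)
  ultimately have "filterlim z (at 0) sequentially"
    by (rule filterlim_atI)
  then have "(\<lambda>n. w n * (((1 - z n) powr (- p) - 1) / z n)) \<longlonglongrightarrow> c * p"
    by (intro tendsto_mult w filterlim_compose[OF tendsto_one_minus_powr_quotient])
  moreover have "\<forall>\<^sub>F n in sequentially.
      w n * (((1 - z n) powr (- p) - 1) / z n) = x (Suc n) powr (1 - \<rho>) - x n powr (1 - \<rho>)"
    using w_pos
  proof eventually_elim
    case (elim n)
    have "w n / z n = x n powr (- p)"
      using elim pos[of n] by (simp add: z_def powr_minus_divide)
    then have "w n * (((1 - z n) powr (- p) - 1) / z n) = x n powr (- p) * ((1 - z n) powr (- p) - 1)"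
      by (metis times_divide_eq_left times_divide_eq_right mult.commute)
    also have "\<dots> = x (Suc n) powr (- p) - x n powr (- p)"
      unfolding step[of n] powr_mult by (simp add: algebra_simps)
    finally show ?case
      by (simp add: p_def)
  qed
  ultimately show ?thesis
    by (simp add: p_def tendsto_cong)
qed

lemma powr_recurrence_asymptotics:
  fixes x w :: "nat \<Rightarrow> real" and c \<rho> :: real
  assumes pos: "\<And>n. 0 < x n" and x: "x \<longlonglongrightarrow> 0" and w: "w \<longlonglongrightarrow> c"
    and c: "0 < c" and \<rho>: "1 < \<rho>"
    and rec: "\<And>n. x (Suc n) = x n - x n powr \<rho> * w n"
  shows "(\<lambda>n. real n powr (1 / (\<rho> - 1)) * x n) \<longlonglongrightarrow> (c * (\<rho> - 1)) powr (- 1 / (\<rho> - 1))"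
proof -
  define p where "p = \<rho> - 1"
  have "(\<lambda>n. x n powr (- p) / real n) \<longlonglongrightarrow> c * p"
    using Stolz_Cesaro_LIMSEQ[OF powr_recurrence_increments[OF assms]] by (simp add: p_def)
  then have "(\<lambda>n. (x n powr (- p) / real n) powr (- 1 / p)) \<longlonglongrightarrow> (c * p) powr (- 1 / p)"
    by (rule tendsto_powr[OF _ tendsto_const]) (use c \<rho> in \<open>simp add: p_def\<close>)
  moreover have "(x n powr (- p) / real n) powr (- 1 / p) = real n powr (1 / p) * x n" for n
  proof -
    have "- p * (- 1 / p) = 1"
      using \<rho> by (simp add: p_def field_simps)
    then have "(x n powr (- p) / real n) powr (- 1 / p) = x n powr 1 / real n powr (- 1 / p)"
      unfolding powr_divide powr_powr by simp
    then show ?thesis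
      using pos[of n] by (simp add: powr_minus_divide)
  qed
  ultimately show ?thesis
    by (simp add: p_def)
qed

section \<open>Orbits of interval maps approaching a fixed endpoint\<close>

lemma orbit_tendsto_upper_endpoint:
  fixes f :: "real \<Rightarrow> real" and u :: "nat \<Rightarrow> real"
  assumes cont: "continuous_on {l<..<r} f"
    and step: "\<And>s. s \<in> {l<..<r} \<Longrightarrow> s < f s \<and> f s < r"
    and orbit: "\<And>n. u (Suc n) = f (u n)" and start: "u 0 \<in> {l<..<r}"
  shows "u n \<in> {l<..<r}" and "u \<longlonglongrightarrow> r"
proof -
  have mem: "u n \<in> {l<..<r}" for n
  proof (induction n)
    case (Suc n)
    then show ?case
      using step[OF Suc] orbit[of n] by auto
  qed (use start in simp)
  then show "u n \<in> {l<..<r}" .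
  have "incseq u"
    by (rule incseq_SucI) (use mem step orbit in \<open>auto intro: less_imp_le\<close>)
  moreover have "bdd_above (range u)"
    using mem by (auto intro!: bdd_aboveI[of _ r] less_imp_le)
  ultimately obtain L where L: "u \<longlonglongrightarrow> L" and le: "\<And>n. u n \<le> L"
    using LIMSEQ_incseq_SUP incseq_le by blast
  have "L \<le> r"
    by (rule LIMSEQ_le_const2[OF L]) (use mem less_imp_le in auto)
  have "L = r"
  proof (rule ccontr)
    assume "L \<noteq> r"
    with \<open>L \<le> r\<close> have L_mem: "L \<in> {l<..<r}"
      using le[of 0] start by auto
    then have "isCont f L"
      using cont by (simp add: continuous_on_eq_continuous_at)
    then have "(\<lambda>n. u (Suc n)) \<longlonglongrightarrow> f L"
      unfolding orbit by (rule isCont_tendsto_compose[OF _ L])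
    then have "f L = L"
      using LIMSEQ_Suc[OF L] LIMSEQ_unique by blast
    with step[OF L_mem] show False
      by simp
  qed
  with L show "u \<longlonglongrightarrow> r"
    by simp
qed

lemma smallo_expansion_imp_tendsto:
  fixes f :: "real \<Rightarrow> real" and c \<rho> :: real
  assumes "(\<lambda>t. 1 - f t - (1 - t) + c * (1 - t) powr \<rho>) \<in> o[at_left 1](\<lambda>t. (1 - t) powr \<rho>)"
  shows "((\<lambda>t. (f t - t) / (1 - t) powr \<rho>) \<longlongrightarrow> c) (at_left 1)"
proof -
  have "((\<lambda>t. c - (1 - f t - (1 - t) + c * (1 - t) powr \<rho>) / (1 - t) powr \<rho>) \<longlongrightarrow> c - 0) (at_left 1)"
    by (intro tendsto_diff tendsto_const smalloD_tendsto[OF assms])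
  moreover have "\<forall>\<^sub>F t in at_left 1. t \<in> {0<..<1::real}"
    by (rule eventually_at_left_real) simp
  then have "\<forall>\<^sub>F t in at_left 1.
      c - (1 - f t - (1 - t) + c * (1 - t) powr \<rho>) / (1 - t) powr \<rho> = (f t - t) / (1 - t) powr \<rho>"
    by eventually_elim (simp add: field_simps)
  ultimately show ?thesis
    by (simp add: tendsto_cong)
qed

lemma orbit_rate_of_convergence:
  fixes f :: "real \<Rightarrow> real" and u :: "nat \<Rightarrow> real" and c \<rho> :: real
  assumes orbit: "\<And>n. u (Suc n) = f (u n)" and below: "\<And>n. u n < 1" and conv: "u \<longlonglongrightarrow> 1"
    and expansion: "((\<lambda>t. (f t - t) / (1 - t) powr \<rho>) \<longlongrightarrow> c) (at_left 1)"
  shows "0 \<le> c"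
    and "0 < c \<Longrightarrow> 1 < \<rho> \<Longrightarrow>
      (\<lambda>n. real n powr (1 / (\<rho> - 1)) * (1 - u n)) \<longlonglongrightarrow> (c * (\<rho> - 1)) powr (- 1 / (\<rho> - 1))"
proof -
  define x where "x n = 1 - u n" for n
  define w where "w n = (f (u n) - u n) / x n powr \<rho>" for n
  have pos: "0 < x n" for n
    using below[of n] by (simp add: x_def)
  have x: "x \<longlonglongrightarrow> 0"
    unfolding x_def using tendsto_diff[OF tendsto_const[of 1] conv] by simp
  have "filterlim u (at_left 1) sequentially"
    by (rule tendsto_imp_filterlim_at_left[OF conv]) (simp add: below)
  then have w: "w \<longlonglongrightarrow> c"
    unfolding w_def x_def by (rule filterlim_compose[OF expansion])
  have rec: "x (Suc n) = x n - x n powr \<rho> * w n" for n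
    using pos[of n] by (simp add: w_def x_def orbit)
  show "0 \<le> c"
    by (rule powr_recurrence_coeff_nonneg[OF pos x w rec])
  show "0 < c \<Longrightarrow> 1 < \<rho> \<Longrightarrow>
      (\<lambda>n. real n powr (1 / (\<rho> - 1)) * (1 - u n)) \<longlonglongrightarrow> (c * (\<rho> - 1)) powr (- 1 / (\<rho> - 1))"
    using powr_recurrence_asymptotics[OF pos x w _ _ rec] by (simp add: x_def)
qed

section \<open>The power series kappa\<close>

lemma abs_le_one_imp_power_le_one:
  fixes x :: real
  assumes "\<bar>x\<bar> \<le> 1"
  shows "x ^ q \<le> 1"
  using power_le_one[OF abs_ge_zero assms, of q] by (metis abs_ge_self order_trans power_abs)

lemma power_ge_tangent_at_one:
  fixes x :: real
  assumes "\<bar>x\<bar> \<le> 1"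
  shows "1 + real q * (x - 1) \<le> x ^ q"
    and "2 \<le> q \<Longrightarrow> x < 1 \<Longrightarrow> 1 + real q * (x - 1) < x ^ q"
proof -
  define gap where "gap q = x ^ q - 1 - real q * (x - 1)" for q
  have "gap q \<le> gap (Suc q)" for q
  proof -
    have "0 \<le> (1 - x) * (1 - x ^ q)"
      using assms abs_le_one_imp_power_le_one[OF assms, of q] by simp
    then show ?thesis
      by (simp add: gap_def algebra_simps)
  qed
  then have mono: "gap m \<le> gap q" if "m \<le> q" for m
    using that by (rule lift_Suc_mono_le)
  show "1 + real q * (x - 1) \<le> x ^ q"
    using mono[of 0] by (simp add: gap_def)
  assume "2 \<le> q" "x < 1"
  moreover have "gap 2 = (1 - x)\<^sup>2"
    by (simp add: gap_def power2_eq_square algebra_simps)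
  ultimately have "0 < gap 2"
    by simp
  with mono[OF \<open>2 \<le> q\<close>] show "1 + real q * (x - 1) < x ^ q"
    by (simp add: gap_def)
qed

lemma kappa_sums:
  assumes "(\<lambda>q. (J q)\<^sup>2 / fact q) sums 1" and "\<bar>x\<bar> \<le> 1"
  shows "(\<lambda>q. (J q)\<^sup>2 / fact q * x ^ q) sums kappa J x"
proof -
  have "norm ((J q)\<^sup>2 / fact q * x ^ q) = (J q)\<^sup>2 / fact q * \<bar>x\<bar> ^ q" for q
    by (simp add: abs_mult power_abs)
  also have "\<dots> q \<le> (J q)\<^sup>2 / fact q" for q
    using abs_le_one_imp_power_le_one[of "\<bar>x\<bar>" q] assms(2) by (intro mult_left_le) auto
  finally have "norm ((J q)\<^sup>2 / fact q * x ^ q) \<le> (J q)\<^sup>2 / fact q" for q .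
  then have "summable (\<lambda>q. (J q)\<^sup>2 / fact q * x ^ q)"
    using assms(1) by (blast intro: summable_comparison_test' sums_summable)
  then show ?thesis
    unfolding kappa_def by (rule summable_sums)
qed

lemma kappa_at_one:
  assumes "(\<lambda>q. (J q)\<^sup>2 / fact q) sums 1"
  shows "kappa J 1 = 1"
  using kappa_sums[OF assms, of 1] assms by (simp add: sums_unique2)

lemma one_minus_kappa_sums:
  assumes "(\<lambda>q. (J q)\<^sup>2 / fact q) sums 1" and "\<bar>x\<bar> \<le> 1"
  shows "(\<lambda>q. (J q)\<^sup>2 / fact q * (1 - x ^ q)) sums (1 - kappa J x)"
    and "0 \<le> (J q)\<^sup>2 / fact q * (1 - x ^ q)"
proof -
  show "(\<lambda>q. (J q)\<^sup>2 / fact q * (1 - x ^ q)) sums (1 - kappa J x)"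
    using sums_diff[OF assms(1) kappa_sums[OF assms]] by (simp add: right_diff_distrib)
  show "0 \<le> (J q)\<^sup>2 / fact q * (1 - x ^ q)"
    using abs_le_one_imp_power_le_one[OF assms(2)] by (intro mult_nonneg_nonneg) auto
qed

lemma kappa_le_one:
  assumes "(\<lambda>q. (J q)\<^sup>2 / fact q) sums 1" and "\<bar>x\<bar> \<le> 1"
  shows "kappa J x \<le> 1"
  using sums_le[OF _ sums_zero one_minus_kappa_sums(1)[OF assms]] one_minus_kappa_sums(2)[OF assms]
  by simp

lemma kappa_less_one:
  assumes "(\<lambda>q. (J q)\<^sup>2 / fact q) sums 1" and "\<bar>x\<bar> < 1"
    and "1 \<le> q0" "J q0 \<noteq> 0"
  shows "kappa J x < 1"
proof -
  have "\<bar>x ^ q0\<bar> < 1"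
    using assms by (simp add: power_abs power_less_one_iff)
  then have "0 < (J q0)\<^sup>2 / fact q0 * (1 - x ^ q0)"
    using assms(4) by simp
  note sums = one_minus_kappa_sums[OF assms(1) less_imp_le[OF assms(2)]]
  have "0 < (\<Sum>q. (J q)\<^sup>2 / fact q * (1 - x ^ q))"
    by (rule suminf_pos2[OF sums_summable[OF sums(1)] sums(2)]) fact
  then show ?thesis
    using sums_unique[OF sums(1)] by simp
qed

lemma continuous_on_kappa:
  assumes "(\<lambda>q. (J q)\<^sup>2 / fact q) sums 1"
  shows "continuous_on {-1<..<1} (kappa J)"
proof -
  have "isCont (\<lambda>x. \<Sum>q. (J q)\<^sup>2 / fact q * x ^ q) x" if "\<bar>x\<bar> < 1" for x :: real
    using kappa_sums[OF assms, of 1] that by (intro isCont_powser[where K = 1]) (auto dest: sums_summable)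
  then show ?thesis
    unfolding kappa_def[abs_def] by (intro continuous_at_imp_continuous_on) auto
qed

lemma kappa_partial_mean_le_quotient:
  assumes "(\<lambda>q. (J q)\<^sup>2 / fact q) sums 1" and "-1 \<le> t" "t < 1"
  shows "(\<Sum>q<n. (J q)\<^sup>2 / fact q * (\<Sum>i<q. t ^ i)) \<le> (1 - kappa J t) / (1 - t)"
proof -
  have "\<bar>t\<bar> \<le> 1"
    using assms by simp
  note sums = one_minus_kappa_sums[OF assms(1) this]
  have "(1 - t) * (\<Sum>q<n. (J q)\<^sup>2 / fact q * (\<Sum>i<q. t ^ i))
      = (\<Sum>q<n. (J q)\<^sup>2 / fact q * (1 - t ^ q))"
    by (simp add: sum_distrib_left one_diff_power_eq mult.left_commute)
  also have "\<dots> \<le> 1 - kappa J t"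
    using sum_le_suminf[OF sums_summable[OF sums(1)] finite_lessThan] sums(2) sums_unique[OF sums(1)]
    by simp
  finally show ?thesis
    using assms(3) by (simp add: pos_le_divide_eq mult.commute)
qed

lemma kappa_mean_le_deriv:
  assumes "(\<lambda>q. (J q)\<^sup>2 / fact q) sums 1"
    and "(kappa J has_real_derivative D) (at_left 1)"
  shows "summable (\<lambda>q. real q * ((J q)\<^sup>2 / fact q))"
    and "(\<Sum>q. real q * ((J q)\<^sup>2 / fact q)) \<le> D"
proof -
  (* (1 - kappa t) / (1 - t) = sum_q a_q (1 + t + ... + t^(q-1)) dominates every partial sum of
     the mean and tends to D as t -> 1-. *)
  have partial: "(\<Sum>q<n. real q * ((J q)\<^sup>2 / fact q)) \<le> D" for n
  proof (rule tendsto_le[OF trivial_limit_at_left_real])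
    have "(kappa J t - kappa J 1) / (t - 1) = (1 - kappa J t) / (1 - t)" for t
      using kappa_at_one[OF assms(1)] by (metis minus_diff_eq minus_divide_divide)
    then show "((\<lambda>t. (1 - kappa J t) / (1 - t)) \<longlongrightarrow> D) (at_left 1)"
      using assms(2) by (simp add: has_field_derivative_iff)
    have "((\<lambda>t. \<Sum>q<n. (J q)\<^sup>2 / fact q * (\<Sum>i<q. t ^ i))
        \<longlongrightarrow> (\<Sum>q<n. (J q)\<^sup>2 / fact q * (\<Sum>i<q. 1 ^ i))) (at_left 1)"
      by (intro tendsto_intros)
    then show "((\<lambda>t. \<Sum>q<n. (J q)\<^sup>2 / fact q * (\<Sum>i<q. t ^ i))
        \<longlongrightarrow> (\<Sum>q<n. real q * ((J q)\<^sup>2 / fact q))) (at_left 1)"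
      by (simp add: mult.commute)
    have "\<forall>\<^sub>F t in at_left (1::real). t \<in> {-1<..<1}"
      by (rule eventually_at_left_real) simp
    then show "\<forall>\<^sub>F t in at_left 1.
        (\<Sum>q<n. (J q)\<^sup>2 / fact q * (\<Sum>i<q. t ^ i)) \<le> (1 - kappa J t) / (1 - t)"
      by eventually_elim (use kappa_partial_mean_le_quotient[OF assms(1)] in auto)
  qed
  show summable: "summable (\<lambda>q. real q * ((J q)\<^sup>2 / fact q))"
    by (rule bounded_imp_summable[where B = D]) (use partial[of "Suc _"] in \<open>auto simp: lessThan_Suc_atMost\<close>)
  show "(\<Sum>q. real q * ((J q)\<^sup>2 / fact q)) \<le> D"
    by (rule suminf_le_const[OF summable partial])
qed

lemma kappa_gt_self:
  assumes "(\<lambda>q. (J q)\<^sup>2 / fact q) sums 1"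
    and "(kappa J has_real_derivative D) (at_left 1)" "D \<le> 1"
    and "2 \<le> q0" "J q0 \<noteq> 0"
    and "-1 \<le> x" "x < 1"
  shows "x < kappa J x"
proof -
  define a where "a q = (J q)\<^sup>2 / fact q" for q
  define S where "S = (\<Sum>q. real q * a q)"
  (* kappa x - x = sum_q a_q (x^q - 1 - q (x - 1)) + (1 - S) (1 - x), and the series is
     positive because of its term q0 >= 2. *)
  have "(\<lambda>q. real q * a q) sums S" "S \<le> 1"
    using kappa_mean_le_deriv[OF assms(1,2)] assms(3) by (simp_all add: S_def a_def summable_sums)
  then have "(\<lambda>q. a q * x ^ q - a q - (x - 1) * (real q * a q)) sums (kappa J x - 1 - (x - 1) * S)"
    using assms(1,6,7) unfolding a_def by (intro sums_diff sums_mult kappa_sums) auto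
  moreover have "a q * x ^ q - a q - (x - 1) * (real q * a q) = a q * (x ^ q - (1 + real q * (x - 1)))" for q
    by (simp add: algebra_simps)
  ultimately have sums: "(\<lambda>q. a q * (x ^ q - (1 + real q * (x - 1)))) sums (kappa J x - 1 - (x - 1) * S)"
    by simp
  have "0 < (\<Sum>q. a q * (x ^ q - (1 + real q * (x - 1))))"
  proof (rule suminf_pos2[OF sums_summable[OF sums]])
    show "0 \<le> a q * (x ^ q - (1 + real q * (x - 1)))" for q
      using power_ge_tangent_at_one(1)[of x q] assms(6,7) by (simp add: a_def)
    show "0 < a q0 * (x ^ q0 - (1 + real q0 * (x - 1)))"
      using power_ge_tangent_at_one(2)[of x q0] assms(4-7) by (simp add: a_def)
  qed
  moreover have "0 \<le> (1 - S) * (1 - x)"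
    using \<open>S \<le> 1\<close> assms(7) by simp
  ultimately show ?thesis
    using sums_unique[OF sums] by (simp add: algebra_simps)
qed

lemma kappa_iterates_tendsto_one:
  assumes k1: "(\<lambda>q. (J q)\<^sup>2 / fact q) sums 1"
    and deriv: "(kappa J has_real_derivative 1) (at_left 1)"
    and q0: "2 \<le> q0" "J q0 \<noteq> 0"
    and t: "t \<in> {-1..1}" "t \<notin> fixset J"
  shows "(kappa J ^^ n) t < 1" and "(\<lambda>n. (kappa J ^^ n) t) \<longlonglongrightarrow> 1"
proof -
  have step: "s < kappa J s \<and> kappa J s < 1" if "s \<in> {-1<..<1}" for s
    using kappa_gt_self[OF k1 deriv order_refl q0] kappa_less_one[OF k1 _ _ q0(2)] q0 that by auto
  have "t \<noteq> 1"
    using t kappa_at_one[OF k1] by (auto simp: fixset_def)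
  then have "t < kappa J t" "kappa J t \<le> 1" "kappa J t \<noteq> 1"
    using t kappa_gt_self[OF k1 deriv order_refl q0] kappa_le_one[OF k1] by (auto simp: fixset_def)
  (* The orbit is followed from kappa t on, since t itself may be -1. *)
  then have start: "(kappa J ^^ 0) (kappa J t) \<in> {-1<..<1}"
    using t by auto
  note orbit = orbit_tendsto_upper_endpoint[where u = "\<lambda>n. (kappa J ^^ n) (kappa J t)",
      OF continuous_on_kappa[OF k1] step funpow.simps(2)[THEN fun_cong, unfolded o_apply] start]
  have iterate: "(kappa J ^^ Suc n) t = (kappa J ^^ n) (kappa J t)" for n
    by (simp add: funpow_Suc_right del: funpow.simps)
  show "(kappa J ^^ n) t < 1"
  proof (cases n)
    case 0
    then show ?thesis
      using t \<open>t \<noteq> 1\<close> by simp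
  next
    case (Suc m)
    then show ?thesis
      using orbit(1)[of m] unfolding Suc iterate by simp
  qed
  show "(\<lambda>n. (kappa J ^^ n) t) \<longlonglongrightarrow> 1"
    by (rule LIMSEQ_imp_Suc) (unfold iterate, rule orbit(2))
qed

lemma kappa_iterates_fixset:
  assumes "(\<lambda>q. (J q)\<^sup>2 / fact q) sums 1" and "t \<in> fixset J" and "0 < n"
  shows "(kappa J ^^ n) t = 1"
  using assms(3)
proof (induction n rule: nat_induct_non_zero)
  case (Suc n)
  then show ?case
    using kappa_at_one[OF assms(1)] by simp
qed (use assms(2) in \<open>simp add: fixset_def\<close>)

theorem lemma3p7:
  fixes J :: "nat \<Rightarrow> real" and c \<rho> :: real
  assumes inf_nonzero: "infinite {q. J q \<noteq> 0}"
    and summ: "summable (\<lambda>q. \<bar>J (Suc q)\<bar> / fact q)"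
    and kappa_one: "(\<lambda>q. (J q)\<^sup>2 / fact q) sums 1"
    and deriv_one: "(kappa J has_real_derivative 1) (at 1 within {-1..1})"
    and c_nz: "c \<noteq> 0" and rho: "\<rho> > 1"
    and expansion: "(\<lambda>t. 1 - kappa J t - (1 - t) + c * (1 - t) powr \<rho>)
                      \<in> o[at_left 1](\<lambda>t. (1 - t) powr \<rho>)"
  shows "c > 0 \<and>
    (\<forall>t \<in> {-1..1}.
      (\<lambda>L. real L powr (1 / (\<rho> - 1)) * (1 - (kappa J ^^ L) t))
        \<longlonglongrightarrow> (if t \<in> fixset J then 0 else (c * (\<rho> - 1)) powr (- 1 / (\<rho> - 1))))"
proof -
  (* summ only serves to make kappa C^1 on [-1,1]; the derivative at 1 is assumed directly. *)
  obtain q0 where q0: "2 \<le> q0" "J q0 \<noteq> 0"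
    using inf_nonzero unfolding infinite_nat_iff_unbounded_le by blast
  have deriv: "(kappa J has_real_derivative 1) (at_left 1)"
    using deriv_one by (simp add: at_within_Icc_at_left)
  note rate = orbit_rate_of_convergence[OF _ kappa_iterates_tendsto_one[OF kappa_one deriv q0]
      smallo_expansion_imp_tendsto[OF expansion]]
  have "0 \<notin> fixset J"
    using kappa_less_one[OF kappa_one, of 0 q0] q0 by (simp add: fixset_def)
  with rate(1)[of 0] c_nz have "0 < c"
    by simp
  moreover have "(\<lambda>L. real L powr (1 / (\<rho> - 1)) * (1 - (kappa J ^^ L) t))
        \<longlonglongrightarrow> (if t \<in> fixset J then 0 else (c * (\<rho> - 1)) powr (- 1 / (\<rho> - 1)))"
    if "t \<in> {-1..1}" for t
  proof (cases "t \<in> fixset J")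
    case True
    then have "\<forall>\<^sub>F L in sequentially. 0 = real L powr (1 / (\<rho> - 1)) * (1 - (kappa J ^^ L) t)"
      by (intro eventually_mono[OF eventually_gt_at_top[of 0]]) (simp add: kappa_iterates_fixset[OF kappa_one])
    then have "(\<lambda>L. real L powr (1 / (\<rho> - 1)) * (1 - (kappa J ^^ L) t)) \<longlonglongrightarrow> 0"
      by (rule Lim_transform_eventually[OF tendsto_const])
    with True show ?thesis
      by simp
  qed (use rate(2) that \<open>0 < c\<close> rho in simp)
  ultimately show ?thesis
    by blast
qed

end
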